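(* In the setting of the context, if $\rho$ is expectation bounded (i.e. $\rho(X)\ge\mathbb{E}[-X]$ for all $X\in L$), then $\rho_0=0$. If $\rho$ is strictly expectation bounded (i.e. $\rho(X)>\mathbb{E}[-X]$ for all non-constant $X\in L$), then $\Pi^\rho_0=\{\mathbf{0}\}$.
   Context: Let $(\Omega,\mathcal{F},\mathbb{P})$ be a probability space and a market: riskless asset $S^0_0=1$, $S^0_1=1+r$, $r>-1$; risky assets $S^1,\dots,S^d$ with constants $S^i_0>0$ and real-valued $\mathcal{F}$-measurable $S^i_1$; returns $R^i:=(S^i_1-S^i_0)/S^i_0$. Standing assumptions: nonredundancy (if $\theta\in\mathbb{R}^{1+d}$ with $\sum_{i=0}^d\theta^iS^i_t=0$ a.s. for $t\in\{0,1\}$ then $\theta=0$), $R^i\in L^1$, $\mathbb{E}[R^i]\ne r$ for some $i$. Excess return: $X_\pi:=\pi\cdot(R-r\mathbf{1})$; $\Pi_0:=\{\pi:\mathbb{E}[X_\pi]=0\}$. $L$ is a Riesz space with $L^\infty\subset L\subset L^1$ containing all $X_\pi$; $\rho:L\to(-\infty,\infty]$ is monotone, cash-invariant and positively homogeneous. $\rho_0:=\inf\{\rho(X_\pi):\pi\in\Pi_0\}$; $\Pi^\rho_0$ is the set of $\pi\in\Pi_0$ with $\rho(X_\pi)<\infty$ and $\rho(X_\pi)\le\rho(X_{\pi'})$ for all $\pi'\in\Pi_0$. *)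

theory Defs
  imports "HOL-Probability.Probability"
begin

text \<open>Market: riskless asset with S^0_0 = 1, S^0_1 = 1 + r; risky assets indexed by a
finite type 'd, initial prices S0 (vector), terminal prices S1 (random vector).\<close>

definition ret :: "real^'d \<Rightarrow> ('a \<Rightarrow> real^'d) \<Rightarrow> 'd \<Rightarrow> 'a \<Rightarrow> real" where
  "ret S0 S1 i \<omega> = (S1 \<omega> $ i - S0 $ i) / S0 $ i"

definition excess :: "real^'d \<Rightarrow> ('a \<Rightarrow> real^'d) \<Rightarrow> real \<Rightarrow> real^'d \<Rightarrow> 'a \<Rightarrow> real" where
  "excess S0 S1 r \<pi> \<omega> = (\<Sum>i\<in>UNIV. \<pi> $ i * (ret S0 S1 i \<omega> - r))"

definition Pi0 :: "'a measure \<Rightarrow> real^'d \<Rightarrow> ('a \<Rightarrow> real^'d) \<Rightarrow> real \<Rightarrow> (real^'d) set" where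
  "Pi0 M S0 S1 r = {\<pi>. integral\<^sup>L M (excess S0 S1 r \<pi>) = 0}"

definition rho0 :: "'a measure \<Rightarrow> real^'d \<Rightarrow> ('a \<Rightarrow> real^'d) \<Rightarrow> real \<Rightarrow> (('a \<Rightarrow> real) \<Rightarrow> ereal) \<Rightarrow> ereal" where
  "rho0 M S0 S1 r \<rho> = (INF \<pi>\<in>Pi0 M S0 S1 r. \<rho> (excess S0 S1 r \<pi>))"

definition PiRho0 :: "'a measure \<Rightarrow> real^'d \<Rightarrow> ('a \<Rightarrow> real^'d) \<Rightarrow> real \<Rightarrow> (('a \<Rightarrow> real) \<Rightarrow> ereal) \<Rightarrow> (real^'d) set" where
  "PiRho0 M S0 S1 r \<rho> = {\<pi> \<in> Pi0 M S0 S1 r. \<rho> (excess S0 S1 r \<pi>) < \<infinity> \<and>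
      (\<forall>\<pi>'\<in>Pi0 M S0 S1 r. \<rho> (excess S0 S1 r \<pi>) \<le> \<rho> (excess S0 S1 r \<pi>'))}"

definition nonredundant :: "'a measure \<Rightarrow> real \<Rightarrow> real^'d \<Rightarrow> ('a \<Rightarrow> real^'d) \<Rightarrow> bool" where
  "nonredundant M r S0 S1 \<longleftrightarrow> (\<forall>(\<theta>0::real) (\<theta>::real^'d).
     (\<theta>0 + (\<Sum>i\<in>UNIV. \<theta> $ i * S0 $ i) = 0 \<and>
      (AE \<omega> in M. \<theta>0 * (1 + r) + (\<Sum>i\<in>UNIV. \<theta> $ i * S1 \<omega> $ i) = 0))
     \<longrightarrow> \<theta>0 = 0 \<and> \<theta> = 0)"

definition riesz_L :: "'a measure \<Rightarrow> ('a \<Rightarrow> real) set \<Rightarrow> bool" where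
  "riesz_L M L \<longleftrightarrow>
     (\<forall>X. X \<in> borel_measurable M \<and> (\<exists>C. AE \<omega> in M. \<bar>X \<omega>\<bar> \<le> C) \<longrightarrow> X \<in> L) \<and>
     (\<forall>X\<in>L. integrable M X) \<and>
     (\<forall>X\<in>L. \<forall>Y\<in>L. (\<lambda>\<omega>. X \<omega> + Y \<omega>) \<in> L) \<and>
     (\<forall>X\<in>L. \<forall>c::real. (\<lambda>\<omega>. c * X \<omega>) \<in> L) \<and>
     (\<forall>X\<in>L. \<forall>Y\<in>L. (\<lambda>\<omega>. max (X \<omega>) (Y \<omega>)) \<in> L)"

definition risk_measure :: "'a measure \<Rightarrow> ('a \<Rightarrow> real) set \<Rightarrow> (('a \<Rightarrow> real) \<Rightarrow> ereal) \<Rightarrow> bool" where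
  "risk_measure M L \<rho> \<longleftrightarrow>
     (\<forall>X\<in>L. \<rho> X \<noteq> -\<infinity>) \<and>
     (\<forall>X\<in>L. \<forall>Y\<in>L. (AE \<omega> in M. X \<omega> \<le> Y \<omega>) \<longrightarrow> \<rho> Y \<le> \<rho> X) \<and>
     (\<forall>X\<in>L. \<forall>m::real. \<rho> (\<lambda>\<omega>. X \<omega> + m) = \<rho> X - ereal m) \<and>
     (\<forall>X\<in>L. \<forall>c::real. c \<ge> 0 \<longrightarrow> \<rho> (\<lambda>\<omega>. c * X \<omega>) = ereal c * \<rho> X)"

definition expectation_bounded :: "'a measure \<Rightarrow> ('a \<Rightarrow> real) set \<Rightarrow> (('a \<Rightarrow> real) \<Rightarrow> ereal) \<Rightarrow> bool" where
  "expectation_bounded M L \<rho> \<longleftrightarrow> (\<forall>X\<in>L. \<rho> X \<ge> ereal (integral\<^sup>L M (\<lambda>\<omega>. - X \<omega>)))"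

definition strictly_expectation_bounded :: "'a measure \<Rightarrow> ('a \<Rightarrow> real) set \<Rightarrow> (('a \<Rightarrow> real) \<Rightarrow> ereal) \<Rightarrow> bool" where
  "strictly_expectation_bounded M L \<rho> \<longleftrightarrow>
     (\<forall>X\<in>L. \<not> (\<exists>c. AE \<omega> in M. X \<omega> = c) \<longrightarrow> \<rho> X > ereal (integral\<^sup>L M (\<lambda>\<omega>. - X \<omega>)))"

end

theory Submission
  imports Defs
begin

text \<open>On \<open>\<Pi>\<^sub>0\<close> the bound \<open>\<rho>(X) \<ge> \<EE>[-X]\<close> reads \<open>\<rho>(X\<^sub>\<pi>) \<ge> 0\<close>, while \<open>X\<^sub>0 = 0\<close> and \<open>\<rho>(0) = 0\<close> by
  positive homogeneity, so the infimum \<open>\<rho>\<^sub>0\<close> is \<open>0\<close>, attained at \<open>\<pi> = 0\<close>. Under the strict bound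
  a minimiser must have an a.s. constant excess return; that constant is its mean, i.e. \<open>0\<close>.
  But \<open>X\<^sub>\<pi>\<close> is the terminal value of the zero-cost portfolio holding \<open>\<pi>\<^sub>i / S\<^sup>i\<^sub>0\<close> units of each
  risky asset, financed by the riskless one, so nonredundancy forces \<open>\<pi> = 0\<close>.\<close>

lemma excess_zero [simp]: "excess S0 S1 r 0 = (\<lambda>\<omega>. 0)"
  by (simp add: excess_def fun_eq_iff)

lemma zero_in_Pi0: "0 \<in> Pi0 M S0 S1 r"
  by (simp add: Pi0_def)

lemma risk_measure_zero:
  assumes "risk_measure M L \<rho>" and "(\<lambda>\<omega>. 0) \<in> L"
  shows "\<rho> (\<lambda>\<omega>. 0) = 0"
proof -
  have "\<forall>X\<in>L. \<forall>c::real. c \<ge> 0 \<longrightarrow> \<rho> (\<lambda>\<omega>. c * X \<omega>) = ereal c * \<rho> X"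
    using assms(1) unfolding risk_measure_def by blast
  from this [rule_format, OF assms(2), of 0] have "\<rho> (\<lambda>\<omega>. 0) = ereal 0 * \<rho> (\<lambda>\<omega>. 0)"
    by simp
  \<comment> \<open>\<open>0 * \<infinity> = 0\<close> in \<open>ereal\<close>\<close>
  then show ?thesis
    by (simp add: zero_ereal_def [symmetric])
qed

lemma (in prob_space) integral_AE_const:
  fixes c :: real
  assumes "f \<in> borel_measurable M" and "AE x in M. f x = c"
  shows "integral\<^sup>L M f = c"
proof -
  have "integral\<^sup>L M f = integral\<^sup>L M (\<lambda>x. c)"
    using assms by (intro integral_cong_AE) auto
  then show ?thesis
    by (simp add: prob_space.prob_space [OF prob_space_axioms])
qed

lemma Pi0_AE_const_eq_zero:
  assumes "prob_space M" and "excess S0 S1 r \<pi> \<in> borel_measurable M"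
    and "\<pi> \<in> Pi0 M S0 S1 r" and "AE \<omega> in M. excess S0 S1 r \<pi> \<omega> = c"
  shows "c = 0"
  using prob_space.integral_AE_const [OF assms(1,2,4)] assms(3) by (simp add: Pi0_def)

lemma excess_eq_portfolio_value:
  assumes "\<forall>i. S0 $ i \<noteq> 0"
  shows "excess S0 S1 r \<pi> \<omega> =
    - (\<Sum>i\<in>UNIV. \<pi> $ i) * (1 + r) + (\<Sum>i\<in>UNIV. (\<pi> $ i / S0 $ i) * S1 \<omega> $ i)"
proof -
  have "excess S0 S1 r \<pi> \<omega> = (\<Sum>i\<in>UNIV. (\<pi> $ i / S0 $ i) * S1 \<omega> $ i - \<pi> $ i * (1 + r))"
    unfolding excess_def ret_def using assms by (intro sum.cong refl) (simp add: field_simps)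
  then show ?thesis
    by (simp add: sum_subtractf sum_distrib_right)
qed

lemma excess_AE_zero_imp_zero:
  assumes "nonredundant M r S0 S1" and "\<forall>i. S0 $ i > 0"
    and "AE \<omega> in M. excess S0 S1 r \<pi> \<omega> = 0"
  shows "\<pi> = 0"
proof -
  define \<theta> where "\<theta> = (\<chi> i. \<pi> $ i / S0 $ i)"
  define \<theta>0 where "\<theta>0 = - (\<Sum>i\<in>UNIV. \<pi> $ i)"
  have S0_nonzero: "\<forall>i. S0 $ i \<noteq> 0"
    using assms(2) by (metis less_irrefl)
  have "\<theta>0 + (\<Sum>i\<in>UNIV. \<theta> $ i * S0 $ i) = 0"
    by (simp add: \<theta>_def \<theta>0_def S0_nonzero)
  moreover have "AE \<omega> in M. \<theta>0 * (1 + r) + (\<Sum>i\<in>UNIV. \<theta> $ i * S1 \<omega> $ i) = 0"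
    using assms(3) by eventually_elim
      (simp add: excess_eq_portfolio_value [OF S0_nonzero] \<theta>_def \<theta>0_def)
  ultimately have "\<theta> = 0"
    using assms(1) unfolding nonredundant_def by blast
  then show ?thesis
    by (simp add: \<theta>_def vec_eq_iff S0_nonzero)
qed

lemma expectation_bounded_Pi0_nonneg:
  assumes "expectation_bounded M L \<rho>" and "excess S0 S1 r \<pi> \<in> L"
    and "\<pi> \<in> Pi0 M S0 S1 r"
  shows "\<rho> (excess S0 S1 r \<pi>) \<ge> 0"
proof -
  have "ereal (integral\<^sup>L M (\<lambda>\<omega>. - excess S0 S1 r \<pi> \<omega>)) \<le> \<rho> (excess S0 S1 r \<pi>)"
    using assms(1,2) unfolding expectation_bounded_def by blast
  with assms(3) show ?thesis
    by (simp add: Pi0_def zero_ereal_def)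
qed

lemma strictly_expectation_bounded_Pi0_pos:
  assumes "prob_space M" and "nonredundant M r S0 S1" and "\<forall>i. S0 $ i > 0"
    and "strictly_expectation_bounded M L \<rho>"
    and "excess S0 S1 r \<pi> \<in> L" and "excess S0 S1 r \<pi> \<in> borel_measurable M"
    and "\<pi> \<in> Pi0 M S0 S1 r" and "\<pi> \<noteq> 0"
  shows "\<rho> (excess S0 S1 r \<pi>) > 0"
proof -
  have "\<not> (\<exists>c. AE \<omega> in M. excess S0 S1 r \<pi> \<omega> = c)"
  proof
    assume "\<exists>c. AE \<omega> in M. excess S0 S1 r \<pi> \<omega> = c"
    then obtain c where c: "AE \<omega> in M. excess S0 S1 r \<pi> \<omega> = c" ..
    moreover have "c = 0"
      using Pi0_AE_const_eq_zero [OF assms(1,6,7) c] .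
    ultimately have "AE \<omega> in M. excess S0 S1 r \<pi> \<omega> = 0"
      by simp
    with excess_AE_zero_imp_zero [OF assms(2,3)] assms(8) show False
      by blast
  qed
  with assms(4,5) have "ereal (integral\<^sup>L M (\<lambda>\<omega>. - excess S0 S1 r \<pi> \<omega>)) < \<rho> (excess S0 S1 r \<pi>)"
    unfolding strictly_expectation_bounded_def by blast
  with assms(7) show ?thesis
    by (simp add: Pi0_def zero_ereal_def)
qed

theorem corollary3p9:
  fixes M :: "'a measure" and r :: real
    and S0 :: "real^'d" and S1 :: "'a \<Rightarrow> real^'d"
    and L :: "('a \<Rightarrow> real) set" and \<rho> :: "('a \<Rightarrow> real) \<Rightarrow> ereal"
  assumes "prob_space M"
    and "r > -1"
    and "\<forall>i. S0 $ i > 0"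
    and "\<forall>i. (\<lambda>\<omega>. S1 \<omega> $ i) \<in> borel_measurable M"
    and "nonredundant M r S0 S1"
    and "\<forall>i. integrable M (ret S0 S1 i)"
    and "\<exists>i. integral\<^sup>L M (ret S0 S1 i) \<noteq> r"
    and "riesz_L M L"
    and "\<forall>\<pi>. excess S0 S1 r \<pi> \<in> L"
    and "risk_measure M L \<rho>"
  shows "(expectation_bounded M L \<rho> \<longrightarrow> rho0 M S0 S1 r \<rho> = 0) \<and>
         (strictly_expectation_bounded M L \<rho> \<longrightarrow> PiRho0 M S0 S1 r \<rho> = {0})"
proof (intro conjI impI)
  have X_in_L: "excess S0 S1 r \<pi> \<in> L" for \<pi>
    using assms(9) by blast
  have X_measurable: "excess S0 S1 r \<pi> \<in> borel_measurable M" for \<pi>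
    using X_in_L assms(8) by (auto simp: riesz_L_def)
  have rho_X0: "\<rho> (excess S0 S1 r 0) = 0"
    using risk_measure_zero [OF assms(10)] X_in_L [of 0] by simp
  show "rho0 M S0 S1 r \<rho> = 0" if "expectation_bounded M L \<rho>"
    unfolding rho0_def
    by (rule INF_eqI)
      (use expectation_bounded_Pi0_nonneg [OF that X_in_L] zero_in_Pi0 rho_X0 in metis)+
  show "PiRho0 M S0 S1 r \<rho> = {0}" if "strictly_expectation_bounded M L \<rho>"
  proof -
    have "\<rho> (excess S0 S1 r \<pi>) > 0" if "\<pi> \<in> Pi0 M S0 S1 r" "\<pi> \<noteq> 0" for \<pi>
      using strictly_expectation_bounded_Pi0_pos [OF assms(1,5,3) \<open>strictly_expectation_bounded M L \<rho>\<close>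
          X_in_L X_measurable that] .
    with zero_in_Pi0 rho_X0 show ?thesis
      unfolding PiRho0_def by (fastforce intro: less_imp_le)
  qed
qed

end
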